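(* Let $G=(V,E)$ be any finite connected undirected unweighted graph with $n$ vertices. For the $\lambda$-mixed Moran process with $\lambda=1/2$ and $r=1$, the fixation probability from any initial mutant set $S_0\subseteq V$ is exactly $|S_0|/n$.
   Context: The $\lambda$-mixed Moran process on a connected graph $G=(V,E)$ with $n=|V|\ge 2$: each vertex hosts a resident (fitness $1$) or mutant (fitness $r>0$); the state is the mutant set $S_t\subseteq V$. Each step, independently: with probability $\lambda$ a Birth-death step (a vertex $u$ chosen with probability proportional to fitness among all vertices; a uniformly random neighbor of $u$ takes $u$'s type); with probability $1-\lambda$ a death-Birth step (a uniformly random vertex $v$ dies; a neighbor $u$ of $v$ chosen with probability proportional to fitness among the neighbors of $v$; $v$ takes $u$'s type). The fixation probability from $S_0$ is the probability that the process reaches $S_t=V$. *)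

theory Defs
  imports "HOL-Analysis.Analysis"
begin

definition connected_graph :: "'a set \<Rightarrow> ('a \<Rightarrow> 'a \<Rightarrow> bool) \<Rightarrow> bool" where
  "connected_graph V E \<longleftrightarrow>
     finite V \<and>
     (\<forall>u v. E u v \<longrightarrow> u \<in> V \<and> v \<in> V) \<and>
     (\<forall>u v. E u v \<longrightarrow> E v u) \<and>
     (\<forall>u. \<not> E u u) \<and>
     (\<forall>u\<in>V. \<forall>v\<in>V. E\<^sup>*\<^sup>* u v)"

definition nbrs :: "'a set \<Rightarrow> ('a \<Rightarrow> 'a \<Rightarrow> bool) \<Rightarrow> 'a \<Rightarrow> 'a set" where
  "nbrs V E u = {v \<in> V. E u v}"

definition fit :: "real \<Rightarrow> 'a set \<Rightarrow> 'a \<Rightarrow> real" where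
  "fit r S u = (if u \<in> S then r else 1)"

definition take_type :: "'a set \<Rightarrow> 'a \<Rightarrow> 'a \<Rightarrow> 'a set" where
  "take_type S u v = (if u \<in> S then insert v S else S - {v})"

definition bd_trans :: "'a set \<Rightarrow> ('a \<Rightarrow> 'a \<Rightarrow> bool) \<Rightarrow> real \<Rightarrow> 'a set \<Rightarrow> 'a set \<Rightarrow> real" where
  "bd_trans V E r S T =
     (\<Sum>u\<in>V. fit r S u / (\<Sum>w\<in>V. fit r S w) *
        (\<Sum>v\<in>nbrs V E u. 1 / real (card (nbrs V E u)) * of_bool (T = take_type S u v)))"

definition db_trans :: "'a set \<Rightarrow> ('a \<Rightarrow> 'a \<Rightarrow> bool) \<Rightarrow> real \<Rightarrow> 'a set \<Rightarrow> 'a set \<Rightarrow> real" where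
  "db_trans V E r S T =
     (\<Sum>v\<in>V. 1 / real (card V) *
        (\<Sum>u\<in>nbrs V E v. fit r S u / (\<Sum>w\<in>nbrs V E v. fit r S w) * of_bool (T = take_type S u v)))"

definition mixed_trans :: "'a set \<Rightarrow> ('a \<Rightarrow> 'a \<Rightarrow> bool) \<Rightarrow> real \<Rightarrow> real \<Rightarrow> 'a set \<Rightarrow> 'a set \<Rightarrow> real" where
  "mixed_trans V E lam r S T = lam * bd_trans V E r S T + (1 - lam) * db_trans V E r S T"

fun state_prob :: "'a set \<Rightarrow> ('a \<Rightarrow> 'a \<Rightarrow> bool) \<Rightarrow> real \<Rightarrow> real \<Rightarrow> 'a set \<Rightarrow> nat \<Rightarrow> 'a set \<Rightarrow> real" where
  "state_prob V E lam r S0 0 T = of_bool (T = S0)"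
| "state_prob V E lam r S0 (Suc t) T =
     (\<Sum>U\<in>Pow V. state_prob V E lam r S0 t U * mixed_trans V E lam r U T)"

text \<open>Fixation probability: probability of ever reaching S_t = V. Since V is
absorbing, this is the limit of P(S_t = V) as t tends to infinity.\<close>
definition fixation_prob :: "'a set \<Rightarrow> ('a \<Rightarrow> 'a \<Rightarrow> bool) \<Rightarrow> real \<Rightarrow> real \<Rightarrow> 'a set \<Rightarrow> real" where
  "fixation_prob V E lam r S0 = lim (\<lambda>t. state_prob V E lam r S0 t V)"

end

theory Submission
  imports Defs
begin

(* With lambda = 1/2 and r = 1, one step makes v copy the type of its neighbour u with
   probability (1/deg u + 1/deg v) / (2n), which is symmetric in u and v.  Hence the
   expected change of |S_t| vanishes, while the expected change of |S_t|^2 is at least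
   1/n^2 whenever S_t is neither empty nor V (such a state has a boundary edge).  Since
   |S_t|^2 <= n^2, the probabilities P(S_t transient) are summable, so they tend to 0 and
   |S_0| = E |S_t| = n P(S_t = V) + o(1). *)

lemma sum_weighted_indicators:
  fixes c :: "'i \<Rightarrow> 'j \<Rightarrow> real"
  assumes "finite A" and "\<And>i j. i \<in> I \<Longrightarrow> j \<in> J i \<Longrightarrow> X i j \<in> A"
  shows "(\<Sum>T\<in>A. (\<Sum>i\<in>I. \<Sum>j\<in>J i. c i j * of_bool (T = X i j)) * h T)
       = (\<Sum>i\<in>I. \<Sum>j\<in>J i. c i j * h (X i j))"
proof -
  have "(\<Sum>T\<in>A. (\<Sum>i\<in>I. \<Sum>j\<in>J i. c i j * of_bool (T = X i j)) * h T)
      = (\<Sum>i\<in>I. \<Sum>j\<in>J i. \<Sum>T\<in>A. c i j * of_bool (T = X i j) * h T)"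
    by (simp only: sum_distrib_right) (subst sum.swap, subst sum.swap, rule refl)
  also have "\<dots> = (\<Sum>i\<in>I. \<Sum>j\<in>J i. c i j * h (X i j))"
  proof (intro sum.cong refl)
    fix i j assume "i \<in> I" "j \<in> J i"
    then have "X i j \<in> A" using assms(2) by blast
    have "(\<Sum>T\<in>A. c i j * of_bool (T = X i j) * h T)
        = (\<Sum>T\<in>A. if X i j = T then c i j * h (X i j) else 0)"
      by (intro sum.cong) auto
    then show "(\<Sum>T\<in>A. c i j * of_bool (T = X i j) * h T) = c i j * h (X i j)"
      using \<open>X i j \<in> A\<close> assms(1) by simp
  qed
  finally show ?thesis .
qed

locale moran_graph =
  fixes V :: "'a set" and E :: "'a \<Rightarrow> 'a \<Rightarrow> bool"
  assumes connected: "connected_graph V E" and two_vertices: "card V \<ge> 2"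
begin

lemma finite_V: "finite V"
  and edge_in_V: "E u v \<Longrightarrow> u \<in> V \<and> v \<in> V"
  and edge_sym: "E u v \<Longrightarrow> E v u"
  and reachable: "u \<in> V \<Longrightarrow> v \<in> V \<Longrightarrow> E\<^sup>*\<^sup>* u v"
  using connected by (auto simp: connected_graph_def)

lemma nbrs_subset: "nbrs V E u \<subseteq> V"
  by (auto simp: nbrs_def)

lemma finite_nbrs: "finite (nbrs V E u)"
  using finite_V nbrs_subset finite_subset by blast

lemma card_V_pos: "real (card V) > 0"
  using two_vertices by simp

lemma sum_nbrs_swap:
  "(\<Sum>u\<in>V. \<Sum>v\<in>nbrs V E u. f u v) = (\<Sum>u\<in>V. \<Sum>v\<in>nbrs V E u. f v u)"
proof -
  have "(\<Sum>u\<in>V. \<Sum>v\<in>nbrs V E u. f u v) = (\<Sum>u\<in>V. \<Sum>v\<in>V. if E u v then f u v else 0)"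
    unfolding nbrs_def using finite_V by (simp add: sum.inter_filter)
  also have "\<dots> = (\<Sum>v\<in>V. \<Sum>u\<in>V. if E u v then f u v else 0)"
    by (rule sum.swap)
  also have "\<dots> = (\<Sum>v\<in>V. \<Sum>u\<in>V. if E v u then f u v else 0)"
    by (intro sum.cong refl if_cong) (auto dest: edge_sym)
  also have "\<dots> = (\<Sum>u\<in>V. \<Sum>v\<in>nbrs V E u. f v u)"
    unfolding nbrs_def using finite_V by (simp add: sum.inter_filter)
  finally show ?thesis .
qed

definition deg :: "'a \<Rightarrow> real" where
  "deg u = real (card (nbrs V E u))"

lemma deg_pos:
  assumes "u \<in> V" shows "deg u > 0"
proof -
  obtain w where w: "w \<in> V" "w \<noteq> u"
    using two_vertices assms by (metis card_le_Suc0_iff_eq finite_V not_less_eq_eq numeral_2_eq_2)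
  obtain z where "E u z"
    using reachable[OF assms w(1)] w(2) by (metis converse_rtranclpE)
  then have "z \<in> nbrs V E u"
    using edge_in_V by (auto simp: nbrs_def)
  then show ?thesis
    unfolding deg_def using finite_nbrs card_gt_0_iff by fastforce
qed

lemma deg_le_card: "deg u \<le> real (card V)"
  unfolding deg_def using card_mono[OF finite_V nbrs_subset] by simp

definition copy_weight :: "'a \<Rightarrow> 'a \<Rightarrow> real" where
  "copy_weight u v = (1 / deg u + 1 / deg v) / (2 * real (card V))"

definition step_mean :: "('a \<Rightarrow> 'a \<Rightarrow> real) \<Rightarrow> real" where
  "step_mean g = (\<Sum>u\<in>V. \<Sum>v\<in>nbrs V E u. copy_weight u v * g u v)"

lemma copy_weight_sym: "copy_weight u v = copy_weight v u"
  unfolding copy_weight_def by simp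

lemma copy_weight_ge:
  assumes "u \<in> V" "v \<in> V" shows "copy_weight u v \<ge> 1 / real (card V) ^ 2"
proof -
  have "1 / real (card V) \<le> 1 / deg w" if "w \<in> V" for w
    using deg_pos[OF that] deg_le_card by (simp add: frac_le)
  then have "2 / real (card V) \<le> 1 / deg u + 1 / deg v"
    using assms by (smt (verit) add_divide_distrib)
  then show ?thesis
    unfolding copy_weight_def using card_V_pos
    by (simp add: field_simps power2_eq_square)
qed

lemma copy_weight_nonneg: "E u v \<Longrightarrow> copy_weight u v \<ge> 0"
  using copy_weight_ge edge_in_V by (meson order_trans zero_le_divide_1_iff zero_le_power2)

lemma step_mean_cong:
  assumes "\<And>u v. E u v \<Longrightarrow> f u v = g u v" shows "step_mean f = step_mean g"
  unfolding step_mean_def by (intro sum.cong refl) (auto simp: nbrs_def assms)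

lemma step_mean_add: "step_mean (\<lambda>u v. f u v + g u v) = step_mean f + step_mean g"
  unfolding step_mean_def by (simp add: distrib_left sum.distrib)

lemma step_mean_cmult: "step_mean (\<lambda>u v. c * f u v) = c * step_mean f"
  unfolding step_mean_def by (simp add: sum_distrib_left mult_ac)

lemma step_mean_const: "step_mean (\<lambda>u v. c) = c"
proof -
  have out_degrees: "(\<Sum>u\<in>V. \<Sum>v\<in>nbrs V E u. 1 / deg u) = real (card V)"
  proof -
    have "(\<Sum>u\<in>V. \<Sum>v\<in>nbrs V E u. 1 / deg u) = (\<Sum>u\<in>V. 1)"
      using deg_pos by (intro sum.cong refl) (simp add: deg_def)
    then show ?thesis by simp
  qed
  have "(\<Sum>u\<in>V. \<Sum>v\<in>nbrs V E u. copy_weight u v)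
      = (\<Sum>u\<in>V. \<Sum>v\<in>nbrs V E u. 1 / deg u) / (2 * real (card V))
        + (\<Sum>u\<in>V. \<Sum>v\<in>nbrs V E u. 1 / deg v) / (2 * real (card V))"
    unfolding copy_weight_def by (simp only: add_divide_distrib sum.distrib sum_divide_distrib)
  also have "\<dots> = 1"
    using out_degrees sum_nbrs_swap[of "\<lambda>u v. 1 / deg u"] card_V_pos by simp
  finally show ?thesis
    unfolding step_mean_def by (simp add: sum_distrib_right[symmetric])
qed

lemma step_mean_antisym:
  assumes "\<And>u v. E u v \<Longrightarrow> g v u = - g u v" shows "step_mean g = 0"
proof -
  have "step_mean g = (\<Sum>u\<in>V. \<Sum>v\<in>nbrs V E u. copy_weight v u * g v u)"
    unfolding step_mean_def by (rule sum_nbrs_swap)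
  also have "\<dots> = - step_mean g"
    unfolding step_mean_def
    by (auto simp: nbrs_def assms copy_weight_sym sum_negf intro!: sum.cong)
  finally show ?thesis by simp
qed

lemma step_mean_nonneg:
  assumes "\<And>u v. E u v \<Longrightarrow> g u v \<ge> 0" shows "step_mean g \<ge> 0"
  unfolding step_mean_def using assms copy_weight_nonneg
  by (auto simp: nbrs_def intro!: sum_nonneg mult_nonneg_nonneg)

lemma step_mean_ge_edge:
  assumes nonneg: "\<And>u v. E u v \<Longrightarrow> g u v \<ge> 0" and "E a b"
  shows "copy_weight a b * g a b \<le> step_mean g"
proof -
  have a: "a \<in> V" and b: "b \<in> nbrs V E a"
    using \<open>E a b\<close> edge_in_V by (auto simp: nbrs_def)
  have terms_nonneg: "copy_weight u v * g u v \<ge> 0" if "v \<in> nbrs V E u" for u v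
    using that nonneg copy_weight_nonneg by (simp add: nbrs_def)
  have "copy_weight a b * g a b \<le> (\<Sum>v\<in>nbrs V E a. copy_weight a v * g a v)"
    using b finite_nbrs terms_nonneg by (intro member_le_sum) auto
  also have "\<dots> \<le> step_mean g"
    unfolding step_mean_def using a finite_V terms_nonneg
    by (intro member_le_sum[where f = "\<lambda>u. \<Sum>v\<in>nbrs V E u. copy_weight u v * g u v"] sum_nonneg) auto
  finally show ?thesis .
qed

lemma take_type_in_Pow: "U \<subseteq> V \<Longrightarrow> v \<in> V \<Longrightarrow> take_type U u v \<in> Pow V"
  by (auto simp: take_type_def)

lemma bd_trans_neutral:
  "bd_trans V E 1 U T
     = (\<Sum>u\<in>V. \<Sum>v\<in>nbrs V E u. 1 / (real (card V) * deg u) * of_bool (T = take_type U u v))"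
  by (simp add: bd_trans_def fit_def deg_def sum_distrib_left)

lemma db_trans_neutral:
  "db_trans V E 1 U T
     = (\<Sum>v\<in>V. \<Sum>u\<in>nbrs V E v. 1 / (real (card V) * deg v) * of_bool (T = take_type U u v))"
  by (simp add: db_trans_def fit_def deg_def sum_distrib_left)

lemma mixed_trans_nonneg: "mixed_trans V E (1/2) 1 U T \<ge> 0"
  unfolding mixed_trans_def bd_trans_neutral db_trans_neutral using deg_pos
  by (auto intro!: add_nonneg_nonneg sum_nonneg mult_nonneg_nonneg simp: nbrs_def less_imp_le)

lemma mixed_trans_expectation:
  assumes "U \<subseteq> V"
  shows "(\<Sum>T\<in>Pow V. mixed_trans V E (1/2) 1 U T * h T) = step_mean (\<lambda>u v. h (take_type U u v))"
proof -
  let ?h = "\<lambda>u v. h (take_type U u v)"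
  have "(\<Sum>T\<in>Pow V. mixed_trans V E (1/2) 1 U T * h T)
      = 1/2 * (\<Sum>T\<in>Pow V. bd_trans V E 1 U T * h T) + 1/2 * (\<Sum>T\<in>Pow V. db_trans V E 1 U T * h T)"
    unfolding mixed_trans_def by (simp add: distrib_right sum.distrib sum_distrib_left mult.assoc)
  also have "(\<Sum>T\<in>Pow V. bd_trans V E 1 U T * h T)
      = (\<Sum>u\<in>V. \<Sum>v\<in>nbrs V E u. 1 / (real (card V) * deg u) * ?h u v)"
    unfolding bd_trans_neutral using finite_V take_type_in_Pow[OF assms] nbrs_subset
    by (intro sum_weighted_indicators) auto
  also have "(\<Sum>T\<in>Pow V. db_trans V E 1 U T * h T)
      = (\<Sum>v\<in>V. \<Sum>u\<in>nbrs V E v. 1 / (real (card V) * deg v) * ?h u v)"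
    unfolding db_trans_neutral using finite_V take_type_in_Pow[OF assms]
    by (intro sum_weighted_indicators[where X = "\<lambda>v u. take_type U u v"]) auto
  also have "\<dots> = (\<Sum>u\<in>V. \<Sum>v\<in>nbrs V E u. 1 / (real (card V) * deg v) * ?h u v)"
    by (rule sum_nbrs_swap)
  also have "1/2 * (\<Sum>u\<in>V. \<Sum>v\<in>nbrs V E u. 1 / (real (card V) * deg u) * ?h u v)
      + 1/2 * (\<Sum>u\<in>V. \<Sum>v\<in>nbrs V E u. 1 / (real (card V) * deg v) * ?h u v)
      = step_mean ?h"
    unfolding step_mean_def copy_weight_def sum_distrib_left sum.distrib[symmetric]
  proof (intro sum.cong refl)
    fix u v assume "u \<in> V" "v \<in> nbrs V E u"
    then have "deg u > 0" "deg v > 0"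
      using deg_pos nbrs_subset by auto
    then show "1/2 * (1 / (real (card V) * deg u) * ?h u v) + 1/2 * (1 / (real (card V) * deg v) * ?h u v)
        = (1 / deg u + 1 / deg v) / (2 * real (card V)) * ?h u v"
      using card_V_pos by (simp add: field_simps)
  qed
  finally show ?thesis .
qed

definition card_change :: "'a set \<Rightarrow> 'a \<Rightarrow> 'a \<Rightarrow> real" where
  "card_change U u v = of_bool (u \<in> U) - of_bool (v \<in> U)"

lemma card_take_type:
  assumes "U \<subseteq> V" "v \<in> V"
  shows "real (card (take_type U u v)) = real (card U) + card_change U u v"
proof -
  have "finite U"
    using assms finite_V finite_subset by blast
  show ?thesis
  proof (cases "v \<in> U")
    case True
    then have "card U \<ge> 1"
      using \<open>finite U\<close> by (metis One_nat_def Suc_leI card_gt_0_iff empty_iff)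
    then show ?thesis
      using True \<open>finite U\<close> by (auto simp: take_type_def card_change_def of_nat_diff insert_absorb)
  next
    case False
    then show ?thesis
      using \<open>finite U\<close> by (auto simp: take_type_def card_change_def)
  qed
qed

lemma step_mean_card:
  assumes "U \<subseteq> V"
  shows "step_mean (\<lambda>u v. real (card (take_type U u v))) = real (card U)"
proof -
  have "step_mean (\<lambda>u v. real (card (take_type U u v)))
      = step_mean (\<lambda>u v. real (card U) + card_change U u v)"
    using card_take_type[OF assms] edge_in_V by (intro step_mean_cong) blast
  also have "\<dots> = real (card U)"
    by (simp add: step_mean_add step_mean_const step_mean_antisym card_change_def)
  finally show ?thesis .
qed

definition transient :: "'a set \<Rightarrow> real" where
  "transient U = of_bool (U \<noteq> {} \<and> U \<noteq> V)"

lemma boundary_edge_exists: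
  assumes "U \<subseteq> V" "U \<noteq> {}" "U \<noteq> V"
  obtains a b where "E a b" "a \<in> U" "b \<notin> U"
proof -
  obtain x y where x: "x \<in> U" and y: "y \<in> V" "y \<notin> U"
    using assms by blast
  have "E\<^sup>*\<^sup>* x y"
    using reachable x y assms by blast
  then have "y \<in> U \<or> (\<exists>a b. E a b \<and> a \<in> U \<and> b \<notin> U)"
    by (induction rule: rtranclp_induct) (use x in auto)
  then show ?thesis
    using y that by blast
qed

lemma step_mean_card_sq:
  assumes "U \<subseteq> V"
  shows "step_mean (\<lambda>u v. real (card (take_type U u v)) ^ 2)
           \<ge> real (card U) ^ 2 + transient U / real (card V) ^ 2"
proof -
  let ?c = "real (card U)" and ?d = "card_change U"
  have "step_mean (\<lambda>u v. real (card (take_type U u v)) ^ 2)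
      = step_mean (\<lambda>u v. ?c ^ 2 + ((2 * ?c) * ?d u v + ?d u v ^ 2))"
    using card_take_type[OF assms] edge_in_V by (intro step_mean_cong) (simp add: power2_sum)
  also have "\<dots> = ?c ^ 2 + step_mean (\<lambda>u v. ?d u v ^ 2)"
    by (simp add: step_mean_add step_mean_cmult step_mean_const step_mean_antisym card_change_def)
  finally have expand: "step_mean (\<lambda>u v. real (card (take_type U u v)) ^ 2)
      = ?c ^ 2 + step_mean (\<lambda>u v. ?d u v ^ 2)" .
  have "transient U / real (card V) ^ 2 \<le> step_mean (\<lambda>u v. ?d u v ^ 2)"
  proof (cases "U \<noteq> {} \<and> U \<noteq> V")
    case True
    then obtain a b where ab: "E a b" "a \<in> U" "b \<notin> U"
      using boundary_edge_exists assms by blast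
    then have "1 / real (card V) ^ 2 \<le> copy_weight a b * ?d a b ^ 2"
      using copy_weight_ge edge_in_V by (simp add: card_change_def)
    also have "\<dots> \<le> step_mean (\<lambda>u v. ?d u v ^ 2)"
      using ab(1) by (intro step_mean_ge_edge) simp
    finally show ?thesis
      using True by (simp add: transient_def)
  next
    case False
    then have "transient U = 0"
      by (simp add: transient_def)
    then show ?thesis
      by (simp add: step_mean_nonneg)
  qed
  then show ?thesis
    unfolding expand by simp
qed

abbreviation prob :: "'a set \<Rightarrow> nat \<Rightarrow> 'a set \<Rightarrow> real" where
  "prob S0 t T \<equiv> state_prob V E (1/2) 1 S0 t T"

definition mean_at :: "'a set \<Rightarrow> nat \<Rightarrow> ('a set \<Rightarrow> real) \<Rightarrow> real" where
  "mean_at S0 t h = (\<Sum>T\<in>Pow V. prob S0 t T * h T)"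

lemma prob_nonneg: "prob S0 t T \<ge> 0"
  by (induction t arbitrary: T) (simp_all add: sum_nonneg mixed_trans_nonneg)

lemma mean_at_Suc:
  "mean_at S0 (Suc t) h = mean_at S0 t (\<lambda>U. step_mean (\<lambda>u v. h (take_type U u v)))"
proof -
  have "mean_at S0 (Suc t) h
      = (\<Sum>T\<in>Pow V. \<Sum>U\<in>Pow V. prob S0 t U * (mixed_trans V E (1/2) 1 U T * h T))"
    unfolding mean_at_def by (simp add: sum_distrib_right mult.assoc)
  also have "\<dots> = (\<Sum>U\<in>Pow V. prob S0 t U * (\<Sum>T\<in>Pow V. mixed_trans V E (1/2) 1 U T * h T))"
    by (subst sum.swap) (simp add: sum_distrib_left)
  also have "\<dots> = mean_at S0 t (\<lambda>U. step_mean (\<lambda>u v. h (take_type U u v)))"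
    unfolding mean_at_def by (intro sum.cong refl) (simp add: mixed_trans_expectation)
  finally show ?thesis .
qed

lemma mean_at_cong: "(\<And>U. U \<subseteq> V \<Longrightarrow> f U = g U) \<Longrightarrow> mean_at S0 t f = mean_at S0 t g"
  unfolding mean_at_def by (intro sum.cong refl) auto

lemma mean_at_mono: "(\<And>U. U \<subseteq> V \<Longrightarrow> f U \<le> g U) \<Longrightarrow> mean_at S0 t f \<le> mean_at S0 t g"
  unfolding mean_at_def by (intro sum_mono mult_left_mono) (auto simp: prob_nonneg)

lemma mean_at_add: "mean_at S0 t (\<lambda>U. f U + g U) = mean_at S0 t f + mean_at S0 t g"
  unfolding mean_at_def by (simp add: sum.distrib algebra_simps)

lemma mean_at_cmult: "mean_at S0 t (\<lambda>U. c * f U) = c * mean_at S0 t f"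
  unfolding mean_at_def by (simp add: sum_distrib_left algebra_simps)

lemma mean_at_divide: "mean_at S0 t (\<lambda>U. f U / c) = mean_at S0 t f / c"
  unfolding mean_at_def by (simp add: sum_divide_distrib)

lemma mean_at_indicator: "mean_at S0 t (\<lambda>U. of_bool (U = T)) = prob S0 t T" if "T \<subseteq> V"
proof -
  have "mean_at S0 t (\<lambda>U. of_bool (U = T)) = (\<Sum>U\<in>Pow V. if T = U then prob S0 t T else 0)"
    unfolding mean_at_def by (intro sum.cong refl) auto
  also have "\<dots> = prob S0 t T"
    using that finite_V by simp
  finally show ?thesis .
qed

context
  fixes S0 assumes S0: "S0 \<subseteq> V"
begin

lemma mean_at_0: "mean_at S0 0 h = h S0"
proof -
  have "mean_at S0 0 h = (\<Sum>T\<in>Pow V. if S0 = T then h S0 else 0)"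
    unfolding mean_at_def by (intro sum.cong refl) auto
  also have "\<dots> = h S0"
    using S0 finite_V by simp
  finally show ?thesis .
qed

lemma mean_at_const: "mean_at S0 t (\<lambda>U. c) = c"
  by (induction t) (simp_all add: mean_at_0 mean_at_Suc step_mean_const)

lemma mean_at_card: "mean_at S0 t (\<lambda>U. real (card U)) = real (card S0)"
proof (induction t)
  case 0
  then show ?case by (simp add: mean_at_0)
next
  case (Suc t)
  have "mean_at S0 (Suc t) (\<lambda>U. real (card U)) = mean_at S0 t (\<lambda>U. real (card U))"
    unfolding mean_at_Suc by (rule mean_at_cong) (rule step_mean_card)
  then show ?case
    using Suc by simp
qed

lemma mean_at_card_sq_Suc:
  "mean_at S0 (Suc t) (\<lambda>U. real (card U) ^ 2)
     \<ge> mean_at S0 t (\<lambda>U. real (card U) ^ 2) + mean_at S0 t transient / real (card V) ^ 2"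
proof -
  have "mean_at S0 t (\<lambda>U. real (card U) ^ 2 + transient U / real (card V) ^ 2)
      \<le> mean_at S0 (Suc t) (\<lambda>U. real (card U) ^ 2)"
    unfolding mean_at_Suc by (intro mean_at_mono step_mean_card_sq)
  then show ?thesis
    by (simp add: mean_at_add mean_at_divide)
qed

lemma mean_at_card_sq_le: "mean_at S0 t (\<lambda>U. real (card U) ^ 2) \<le> real (card V) ^ 2"
proof -
  have "mean_at S0 t (\<lambda>U. real (card U) ^ 2) \<le> mean_at S0 t (\<lambda>U. real (card V) ^ 2)"
    using finite_V card_mono by (intro mean_at_mono) (auto intro!: power_mono)
  then show ?thesis
    by (simp add: mean_at_const)
qed

lemma mean_at_transient_nonneg: "mean_at S0 t transient \<ge> 0"
  using mean_at_mono[of "\<lambda>U. 0" transient S0 t] by (simp add: mean_at_const transient_def)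

lemma sum_mean_at_transient_le:
  "(\<Sum>s<t. mean_at S0 s transient) \<le> real (card V) ^ 4"
proof -
  have "(\<Sum>s<t. mean_at S0 s transient) / real (card V) ^ 2 \<le> mean_at S0 t (\<lambda>U. real (card U) ^ 2)"
  proof (induction t)
    case 0
    then show ?case
      by (simp add: mean_at_0)
  next
    case (Suc t)
    then show ?case
      using mean_at_card_sq_Suc[of t] by (simp add: add_divide_distrib)
  qed
  also have "\<dots> \<le> real (card V) ^ 2"
    by (rule mean_at_card_sq_le)
  finally show ?thesis
    using card_V_pos by (simp add: pos_divide_le_eq power4_eq_xxxx power2_eq_square mult_ac)
qed

lemma mean_at_transient_tendsto_0: "(\<lambda>t. mean_at S0 t transient) \<longlonglongrightarrow> 0"
proof -
  have "summable (\<lambda>t. mean_at S0 t transient)"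
    using mean_at_transient_nonneg sum_mean_at_transient_le by (rule summableI_nonneg_bounded)
  then show ?thesis
    by (rule summable_LIMSEQ_zero)
qed

lemma prob_fixation_tendsto: "(\<lambda>t. prob S0 t V) \<longlonglongrightarrow> real (card S0) / real (card V)"
proof -
  let ?rest = "\<lambda>t. mean_at S0 t (\<lambda>U. real (card U) * transient U)"
  have decompose: "real (card S0) = real (card V) * prob S0 t V + ?rest t" for t
  proof -
    have "real (card S0)
        = mean_at S0 t (\<lambda>U. real (card V) * of_bool (U = V) + real (card U) * transient U)"
      unfolding mean_at_card[of t, symmetric] by (intro mean_at_cong) (auto simp: transient_def)
    then show ?thesis
      by (simp add: mean_at_add mean_at_cmult mean_at_indicator)
  qed
  have "?rest \<longlonglongrightarrow> 0"
  proof (rule real_tendsto_sandwich)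
    show "\<forall>\<^sub>F t in sequentially. 0 \<le> ?rest t"
      using mean_at_mono[of "\<lambda>U. 0" "\<lambda>U. real (card U) * transient U" S0]
      by (simp add: mean_at_const transient_def)
    have "?rest t \<le> mean_at S0 t (\<lambda>U. real (card V) * transient U)" for t
      using finite_V card_mono by (intro mean_at_mono) (auto simp: transient_def)
    then show "\<forall>\<^sub>F t in sequentially. ?rest t \<le> real (card V) * mean_at S0 t transient"
      by (simp add: mean_at_cmult)
    show "(\<lambda>t. real (card V) * mean_at S0 t transient) \<longlonglongrightarrow> 0"
      using tendsto_mult_right_zero[OF mean_at_transient_tendsto_0] by simp
  qed simp
  then have "(\<lambda>t. (real (card S0) - ?rest t) / real (card V))
      \<longlonglongrightarrow> (real (card S0) - 0) / real (card V)"
    using card_V_pos by (intro tendsto_divide tendsto_diff tendsto_const) simp_all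
  moreover have "(real (card S0) - ?rest t) / real (card V) = prob S0 t V" for t
    using decompose[of t] card_V_pos by (simp add: field_simps)
  ultimately show ?thesis
    by simp
qed

end

end

theorem mainTheorem4:
  fixes V :: "'a set" and E :: "'a \<Rightarrow> 'a \<Rightarrow> bool" and S0 :: "'a set"
  assumes "connected_graph V E"
    and "card V \<ge> 2"
    and "S0 \<subseteq> V"
  shows "fixation_prob V E (1/2) 1 S0 = real (card S0) / real (card V)"
proof -
  interpret moran_graph V E
    using assms(1,2) by unfold_locales
  show ?thesis
    unfolding fixation_prob_def using prob_fixation_tendsto[OF assms(3)] by (rule limI)
qed

end
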